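(* Let $C$, $\mathbb{P}^3_{\omega+}$ and $W'=Sec(C)\cap\mathbb{P}^3_{\omega+}$ be as below. For each partition $\{w_1,\dots,w_6\}=\{w_i,w_j,w_k\}\sqcup\{w_l,w_m,w_n\}$ of the Weierstrass points into two triples, let $\mathbb{P}^2_{ijk}$ (resp. $\mathbb{P}^2_{lmn}$) be the plane of $\mathbb{P}^3_{\omega+}$ spanned by $w_i,w_j,w_k$ (resp. $w_l,w_m,w_n$) and $\mathbb{P}^1_{ijk}=\mathbb{P}^2_{ijk}\cap\mathbb{P}^2_{lmn}$. Then each of these $10$ lines $\mathbb{P}^1_{ijk}$ is contained in $W'$.
   Context: $C$ is a smooth complex projective genus 2 curve with canonical bundle $\omega$, hyperelliptic involution $\lambda$ and Weierstrass points $w_1,\dots,w_6$, embedded in $\mathbb{P}^4_\omega=\mathbb{P}(H^0(C,\omega^3)^* )$ by $|\omega^3|$. $\lambda$ is linearized on $\omega$ acting as the identity on fibres over Weierstrass points; $H^0(C,\omega^3)_\pm$ are the eigenspaces (dimensions 4 and 1), and $\mathbb{P}^3_{\omega+}=\mathbb{P}(H^0(C,\omega^3)_+^* )\subset\mathbb{P}^4_\omega$ is the hyperplane annihilating $H^0(C,\omega^3)_-$; one has $C\cap\mathbb{P}^3_{\omega+}=\{w_1,\dots,w_6\}$. $Sec(C)$ is the secant variety of $C\subset\mathbb{P}^4_\omega$. *)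

theory Defs
  imports "HOL-Analysis.Analysis"
begin

text \<open>Concrete model: a smooth genus 2 curve C over the complex numbers is given by
  y^2 = F(x,z), F a binary sextic form with nonzero coefficient vector and no repeated
  root (equivalently: the curve is smooth), sitting in weighted projective space
  P(1,3,1).  H^0(C, omega^3) has basis z^3, x z^2, x^2 z, x^3, y (times (dx/y)^3),
  the first four spanning the lambda-invariant part and y the anti-invariant part.
  Points of P^4 are represented by their affine cones in complex^5.\<close>

definition sext :: "(nat \<Rightarrow> complex) \<Rightarrow> complex \<Rightarrow> complex \<Rightarrow> complex" where
  "sext a x z = (\<Sum>i\<le>6. a i * x ^ i * z ^ (6 - i))"

definition sext_dx :: "(nat \<Rightarrow> complex) \<Rightarrow> complex \<Rightarrow> complex \<Rightarrow> complex" where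
  "sext_dx a x z = (\<Sum>i\<le>6. of_nat i * a i * x ^ (i - 1) * z ^ (6 - i))"

definition sext_dz :: "(nat \<Rightarrow> complex) \<Rightarrow> complex \<Rightarrow> complex \<Rightarrow> complex" where
  "sext_dz a x z = (\<Sum>i\<le>6. of_nat (6 - i) * a i * x ^ i * z ^ (5 - i))"

definition genus2_coeffs :: "(nat \<Rightarrow> complex) \<Rightarrow> bool" where
  "genus2_coeffs a \<longleftrightarrow> (\<exists>i\<le>6. a i \<noteq> 0) \<and>
     (\<forall>x z. (x, z) \<noteq> (0, 0) \<and> sext a x z = 0 \<longrightarrow> sext_dx a x z \<noteq> 0 \<or> sext_dz a x z \<noteq> 0)"

definition emb :: "complex \<Rightarrow> complex \<Rightarrow> complex \<Rightarrow> complex ^ 5" where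
  "emb x z y = vector [z ^ 3, x * z ^ 2, x ^ 2 * z, x ^ 3, y]"

definition curve_cone :: "(nat \<Rightarrow> complex) \<Rightarrow> (complex ^ 5) set" where
  "curve_cone a = {emb x z y | x z y. y ^ 2 = sext a x z}"

text \<open>Affine cone over Sec(C): closure (classical = Zariski for this constructible cone)
  of the union of all secant lines.\<close>
definition sec_cone :: "(nat \<Rightarrow> complex) \<Rightarrow> (complex ^ 5) set" where
  "sec_cone a = closure {u + v | u v. u \<in> curve_cone a \<and> v \<in> curve_cone a}"

text \<open>Cone over P^3_{omega+}: annihilator of the anti-invariant section y.\<close>
definition plus_hyperplane :: "(complex ^ 5) set" where
  "plus_hyperplane = {v. v $ 5 = 0}"

definition W' :: "(nat \<Rightarrow> complex) \<Rightarrow> (complex ^ 5) set" where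
  "W' a = sec_cone a \<inter> plus_hyperplane"

text \<open>Nonzero representative of a Weierstrass point (point of C in P^3_{omega+}).\<close>
definition weierstrass_vec :: "(nat \<Rightarrow> complex) \<Rightarrow> complex ^ 5 \<Rightarrow> bool" where
  "weierstrass_vec a v \<longleftrightarrow> v \<in> curve_cone a \<and> v \<noteq> 0 \<and> v \<in> plus_hyperplane"

definition proj_distinct :: "complex ^ 5 \<Rightarrow> complex ^ 5 \<Rightarrow> bool" where
  "proj_distinct u v \<longleftrightarrow> (\<forall>c::complex. u \<noteq> c *s v)"

definition cspan3 :: "complex ^ 5 \<Rightarrow> complex ^ 5 \<Rightarrow> complex ^ 5 \<Rightarrow> (complex ^ 5) set" where
  "cspan3 u v w = {c1 *s u + c2 *s v + c3 *s w | c1 c2 c3. True}"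

end

theory Submission
  imports Defs "HOL-Computational_Algebra.Polynomial"
begin

text \<open>
  Write the curve as y^2 = F(x, z) with F a binary sextic. The Weierstrass points are the six
  roots of F, so F = g h with g, h binary cubics vanishing at w_i, w_j, w_k and at w_l, w_m, w_n.
  Identifying H^0(C, omega^3)_+ with binary cubics, g and h are linear forms on P^3_omega+
  vanishing on the planes P^2_ijk and P^2_lmn, so the line P^1_ijk lies in {g = h = 0}.
  A point q of P^3_omega+ off the tangent surface of the twisted cubic
  (x : z) |-> (z^3 : x z^2 : x^2 z : x^3) lies on a secant of it: q = nu(x, z) + nu(x', z').
  If g(q) = h(q) = 0 then g(x, z) = -g(x', z') and h(x, z) = -h(x', z'), hence
  F(x, z) = F(x', z'), and q is the sum of the points (x, z, y) and (x', z', -y) of C.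
  The line contains a point off the tangent surface, hence all but finitely many of its points
  are of this kind, and the whole line lies in the closed set Sec(C).
\<close>

section \<open>Binary forms\<close>

definition binary_form :: "nat \<Rightarrow> (nat \<Rightarrow> 'a::comm_semiring_1) \<Rightarrow> 'a \<Rightarrow> 'a \<Rightarrow> 'a" where
  "binary_form n b x z = (\<Sum>i\<le>n. b i * x ^ i * z ^ (n - i))"

definition is_binary_form :: "nat \<Rightarrow> ('a::comm_semiring_1 \<Rightarrow> 'a \<Rightarrow> 'a) \<Rightarrow> bool" where
  "is_binary_form n f \<longleftrightarrow> (\<exists>b. f = binary_form n b)"

lemma is_binary_form_monom:
  assumes "k \<le> n"
  shows "is_binary_form n (\<lambda>x z. c * x ^ k * z ^ (n - k))"
proof -
  have "binary_form n (\<lambda>i. if i = k then c else 0) x z = c * x ^ k * z ^ (n - k)" for x z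
  proof -
    have "binary_form n (\<lambda>i. if i = k then c else 0) x z
        = (\<Sum>i\<le>n. if i = k then c * x ^ i * z ^ (n - i) else 0)"
      unfolding binary_form_def by (rule sum.cong) auto
    then show ?thesis using assms by simp
  qed
  then have "(\<lambda>x z. c * x ^ k * z ^ (n - k)) = binary_form n (\<lambda>i. if i = k then c else 0)"
    by (simp add: fun_eq_iff)
  then show ?thesis unfolding is_binary_form_def by blast
qed

lemma is_binary_form_zero: "is_binary_form n (\<lambda>x z. 0)"
  unfolding is_binary_form_def binary_form_def by (rule exI[of _ "\<lambda>i. 0"]) (simp add: fun_eq_iff)

lemma is_binary_form_add:
  assumes "is_binary_form n f" "is_binary_form n g"
  shows "is_binary_form n (\<lambda>x z. f x z + g x z)"
proof -
  obtain b c where "f = binary_form n b" "g = binary_form n c"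
    using assms unfolding is_binary_form_def by blast
  then have "(\<lambda>x z. f x z + g x z) = binary_form n (\<lambda>i. b i + c i)"
    by (simp add: fun_eq_iff binary_form_def sum.distrib distrib_right)
  then show ?thesis unfolding is_binary_form_def by blast
qed

lemma is_binary_form_scale:
  assumes "is_binary_form n f"
  shows "is_binary_form n (\<lambda>x z. c * f x z)"
proof -
  obtain b where "f = binary_form n b" using assms unfolding is_binary_form_def by blast
  then have "(\<lambda>x z. c * f x z) = binary_form n (\<lambda>i. c * b i)"
    by (simp add: fun_eq_iff binary_form_def sum_distrib_left mult.assoc)
  then show ?thesis unfolding is_binary_form_def by blast
qed

lemma is_binary_form_diff:
  fixes f g :: "'a::comm_ring_1 \<Rightarrow> 'a \<Rightarrow> 'a"
  assumes "is_binary_form n f" "is_binary_form n g"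
  shows "is_binary_form n (\<lambda>x z. f x z - g x z)"
proof -
  obtain b c where "f = binary_form n b" "g = binary_form n c"
    using assms unfolding is_binary_form_def by blast
  then have "(\<lambda>x z. f x z - g x z) = binary_form n (\<lambda>i. b i - c i)"
    by (simp add: fun_eq_iff binary_form_def sum_subtractf left_diff_distrib)
  then show ?thesis unfolding is_binary_form_def by blast
qed

lemma is_binary_form_sum:
  assumes "finite A" "\<And>j. j \<in> A \<Longrightarrow> is_binary_form n (F j)"
  shows "is_binary_form n (\<lambda>x z. \<Sum>j\<in>A. F j x z)"
  using assms by (induction A rule: finite_induct) (simp_all add: is_binary_form_zero is_binary_form_add)

lemma is_binary_form_swap:
  assumes "is_binary_form n f"
  shows "is_binary_form n (\<lambda>x z. f z x)"
proof -
  obtain b where b: "f = binary_form n b" using assms unfolding is_binary_form_def by blast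
  have "f z x = binary_form n (\<lambda>i. b (n - i)) x z" for x z
  proof -
    have "f z x = (\<Sum>i=0..n. b (n - i) * z ^ (n - i) * x ^ (n - (n - i)))"
      using sum.atLeastAtMost_rev[of "\<lambda>i. b i * z ^ i * x ^ (n - i)" 0 n]
      by (simp add: b binary_form_def atMost_atLeast0)
    also have "\<dots> = binary_form n (\<lambda>i. b (n - i)) x z"
      unfolding binary_form_def atMost_atLeast0 by (rule sum.cong) (auto simp: ac_simps)
    finally show ?thesis .
  qed
  then show ?thesis unfolding is_binary_form_def by blast
qed

lemma is_binary_form_linear_mult:
  fixes f :: "'a::comm_ring_1 \<Rightarrow> 'a \<Rightarrow> 'a"
  assumes "is_binary_form n f"
  shows "is_binary_form (Suc n) (\<lambda>x z. (B * x - A * z) * f x z)"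
proof -
  obtain b where b: "f = binary_form n b" using assms unfolding is_binary_form_def by blast
  have x_mult: "x * f x z = (\<Sum>i\<le>n. b i * x ^ Suc i * z ^ (Suc n - Suc i))" for x z
    by (simp add: b binary_form_def sum_distrib_left algebra_simps)
  have z_mult: "z * f x z = (\<Sum>i\<le>n. b i * x ^ i * z ^ (Suc n - i))" for x z
    unfolding b binary_form_def sum_distrib_left by (rule sum.cong) (auto simp: Suc_diff_le)
  have expand: "(\<lambda>x z. (B * x - A * z) * f x z) = (\<lambda>x z. (\<Sum>i\<le>n. (B * b i) * x ^ Suc i * z ^ (Suc n - Suc i))
      - (\<Sum>i\<le>n. (A * b i) * x ^ i * z ^ (Suc n - i)))"
  proof (intro ext)
    fix x z
    have "(B * x - A * z) * f x z = B * (x * f x z) - A * (z * f x z)"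
      by (simp add: algebra_simps)
    also have "\<dots> = (\<Sum>i\<le>n. (B * b i) * x ^ Suc i * z ^ (Suc n - Suc i))
        - (\<Sum>i\<le>n. (A * b i) * x ^ i * z ^ (Suc n - i))"
      by (simp only: x_mult z_mult sum_distrib_left mult.assoc)
    finally show "(B * x - A * z) * f x z = (\<Sum>i\<le>n. (B * b i) * x ^ Suc i * z ^ (Suc n - Suc i))
        - (\<Sum>i\<le>n. (A * b i) * x ^ i * z ^ (Suc n - i))" .
  qed
  have B_part: "is_binary_form (Suc n) (\<lambda>x z. \<Sum>i\<le>n. (B * b i) * x ^ Suc i * z ^ (Suc n - Suc i))"
  proof (rule is_binary_form_sum)
    show "is_binary_form (Suc n) (\<lambda>x z. B * b i * x ^ Suc i * z ^ (Suc n - Suc i))" if "i \<in> {..n}" for i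
      using that by (intro is_binary_form_monom[of "Suc i" "Suc n" "B * b i"]) simp
  qed simp
  have A_part: "is_binary_form (Suc n) (\<lambda>x z. \<Sum>i\<le>n. (A * b i) * x ^ i * z ^ (Suc n - i))"
  proof (rule is_binary_form_sum)
    show "is_binary_form (Suc n) (\<lambda>x z. A * b i * x ^ i * z ^ (Suc n - i))" if "i \<in> {..n}" for i
      using that by (intro is_binary_form_monom[of i "Suc n" "A * b i"]) simp
  qed simp
  show ?thesis unfolding expand by (rule is_binary_form_diff[OF B_part A_part])
qed

lemma is_binary_form_prod_linear:
  fixes X Z :: "nat \<Rightarrow> 'a::comm_ring_1"
  shows "is_binary_form n (\<lambda>x z. \<Prod>j<n. Z j * x - X j * z)"
proof (induction n)
  case 0
  have "(\<lambda>x z. 1) = binary_form 0 (\<lambda>i. 1::'a)" by (simp add: fun_eq_iff binary_form_def)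
  then show ?case unfolding is_binary_form_def by auto
next
  case (Suc n)
  then show ?case using is_binary_form_linear_mult[OF Suc, of "Z n" "X n"]
    by (simp add: mult.commute)
qed

lemma binary_monomial_diff_factor:
  fixes x z x0 z0 :: "'a::comm_ring_1"
  assumes "i \<le> Suc n"
  shows "z0 ^ Suc n * (x ^ i * z ^ (Suc n - i)) - z ^ Suc n * (x0 ^ i * z0 ^ (Suc n - i))
       = (z0 * x - x0 * z) * (\<Sum>k<i. z0 ^ (Suc n - i) * x0 ^ (i - Suc k) * z0 ^ k * x ^ k * z ^ (n - k))"
proof -
  have "z0 ^ Suc n = z0 ^ (Suc n - i) * z0 ^ i" "z ^ Suc n = z ^ (Suc n - i) * z ^ i"
    using assms by (simp_all flip: power_add)
  then have "z0 ^ Suc n * (x ^ i * z ^ (Suc n - i)) - z ^ Suc n * (x0 ^ i * z0 ^ (Suc n - i))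
      = (z * z0) ^ (Suc n - i) * ((x * z0) ^ i - (x0 * z) ^ i)"
    by (simp add: power_mult_distrib algebra_simps)
  also have "\<dots> = (z * z0) ^ (Suc n - i) * ((x * z0 - x0 * z) * (\<Sum>k<i. (x0 * z) ^ (i - Suc k) * (x * z0) ^ k))"
    by (simp add: power_diff_sumr2)
  also have "\<dots> = (z0 * x - x0 * z) * (\<Sum>k<i. (z * z0) ^ (Suc n - i) * ((x0 * z) ^ (i - Suc k) * (x * z0) ^ k))"
    by (simp add: sum_distrib_left algebra_simps)
  also have "(\<Sum>k<i. (z * z0) ^ (Suc n - i) * ((x0 * z) ^ (i - Suc k) * (x * z0) ^ k))
      = (\<Sum>k<i. z0 ^ (Suc n - i) * x0 ^ (i - Suc k) * z0 ^ k * x ^ k * z ^ (n - k))"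
  proof (rule sum.cong)
    fix k assume "k \<in> {..<i}"
    then have z_pow: "z ^ (Suc n - i) * z ^ (i - Suc k) = z ^ (n - k)"
      using assms by (simp flip: power_add)
    have "(z * z0) ^ (Suc n - i) * ((x0 * z) ^ (i - Suc k) * (x * z0) ^ k)
        = z0 ^ (Suc n - i) * x0 ^ (i - Suc k) * z0 ^ k * x ^ k * (z ^ (Suc n - i) * z ^ (i - Suc k))"
      by (simp add: power_mult_distrib algebra_simps)
    then show "(z * z0) ^ (Suc n - i) * ((x0 * z) ^ (i - Suc k) * (x * z0) ^ k)
        = z0 ^ (Suc n - i) * x0 ^ (i - Suc k) * z0 ^ k * x ^ k * z ^ (n - k)"
      by (simp only: z_pow)
  qed simp
  finally show ?thesis .
qed

lemma binary_form_factor_root_nonzero_z: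
  fixes f :: "'a::field \<Rightarrow> 'a \<Rightarrow> 'a"
  assumes "is_binary_form (Suc n) f" "f x0 z0 = 0" "z0 \<noteq> 0"
  shows "\<exists>R. is_binary_form n R \<and> (\<forall>x z. f x z = (z0 * x - x0 * z) * R x z)"
proof -
  obtain b where b: "f = binary_form (Suc n) b" using assms(1) unfolding is_binary_form_def by blast
  define c where "c i k = b i * (z0 ^ (Suc n - i) * x0 ^ (i - Suc k) * z0 ^ k)" for i k
  define S where "S x z = (\<Sum>i\<le>Suc n. \<Sum>k<i. c i k * x ^ k * z ^ (n - k))" for x z
  have "is_binary_form n S"
    unfolding S_def
  proof (intro is_binary_form_sum)
    show "is_binary_form n (\<lambda>x z. c i k * x ^ k * z ^ (n - k))" if "i \<in> {..Suc n}" "k \<in> {..<i}" for i k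
      using that by (intro is_binary_form_monom[of k n "c i k"]) simp
  qed simp_all
  have scaled: "z0 ^ Suc n * f x z = (z0 * x - x0 * z) * S x z" for x z
  proof -
    have "z0 ^ Suc n * f x z = z0 ^ Suc n * f x z - z ^ Suc n * f x0 z0"
      using assms(2) by simp
    also have "\<dots> = (\<Sum>i\<le>Suc n. b i * (z0 ^ Suc n * (x ^ i * z ^ (Suc n - i)) - z ^ Suc n * (x0 ^ i * z0 ^ (Suc n - i))))"
      by (simp add: b binary_form_def sum_distrib_left sum_subtractf algebra_simps)
    also have "\<dots> = (\<Sum>i\<le>Suc n. b i * ((z0 * x - x0 * z) *
        (\<Sum>k<i. z0 ^ (Suc n - i) * x0 ^ (i - Suc k) * z0 ^ k * x ^ k * z ^ (n - k))))"
      by (rule sum.cong) (simp_all add: binary_monomial_diff_factor del: power_Suc)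
    also have "\<dots> = (z0 * x - x0 * z) * S x z"
      by (simp add: S_def c_def sum_distrib_left algebra_simps)
    finally show ?thesis .
  qed
  have "f x z = (z0 * x - x0 * z) * (inverse (z0 ^ Suc n) * S x z)" for x z
  proof -
    have "f x z = inverse (z0 ^ Suc n) * (z0 ^ Suc n * f x z)"
      using assms(3) by (simp add: mult.assoc[symmetric] del: power_Suc)
    also have "\<dots> = inverse (z0 ^ Suc n) * ((z0 * x - x0 * z) * S x z)"
      by (simp only: scaled)
    also have "\<dots> = (z0 * x - x0 * z) * (inverse (z0 ^ Suc n) * S x z)"
      by (simp only: ac_simps)
    finally show ?thesis .
  qed
  moreover have "is_binary_form n (\<lambda>x z. inverse (z0 ^ Suc n) * S x z)"
    using \<open>is_binary_form n S\<close> by (rule is_binary_form_scale)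
  ultimately show ?thesis by blast
qed

lemma binary_form_factor_root:
  fixes f :: "'a::field \<Rightarrow> 'a \<Rightarrow> 'a"
  assumes "is_binary_form (Suc n) f" "f x0 z0 = 0" "(x0, z0) \<noteq> (0, 0)"
  shows "\<exists>R. is_binary_form n R \<and> (\<forall>x z. f x z = (z0 * x - x0 * z) * R x z)"
proof (cases "z0 = 0")
  case False
  show ?thesis using binary_form_factor_root_nonzero_z[OF assms(1,2) False] .
next
  case True
  with assms(3) have "x0 \<noteq> 0" by simp
  from assms(1) have swapped: "is_binary_form (Suc n) (\<lambda>x z. f z x)" by (rule is_binary_form_swap)
  have "\<exists>R. is_binary_form n R \<and> (\<forall>x z. f z x = (x0 * x - z0 * z) * R x z)"
    by (rule binary_form_factor_root_nonzero_z[OF swapped assms(2) \<open>x0 \<noteq> 0\<close>])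
  then obtain R where R: "is_binary_form n R" "\<forall>x z. f z x = (x0 * x - z0 * z) * R x z"
    by (elim exE conjE)
  have "is_binary_form n (\<lambda>x z. - 1 * R z x)"
    using is_binary_form_scale[OF is_binary_form_swap[OF R(1)]] .
  moreover have "\<forall>x z. f x z = (z0 * x - x0 * z) * (- 1 * R z x)"
    using R(2) by (simp add: algebra_simps)
  ultimately show ?thesis by (intro exI[of _ "\<lambda>x z. - 1 * R z x"] conjI)
qed

lemma binary_form_eq_prod_roots:
  fixes f :: "'a::field \<Rightarrow> 'a \<Rightarrow> 'a"
  assumes "is_binary_form n f"
    and "\<And>j. j < n \<Longrightarrow> (X j, Z j) \<noteq> (0, 0) \<and> f (X j) (Z j) = 0"
    and "\<And>i j. i < n \<Longrightarrow> j < n \<Longrightarrow> i \<noteq> j \<Longrightarrow> Z i * X j - X i * Z j \<noteq> 0"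
  shows "\<exists>c. \<forall>x z. f x z = c * (\<Prod>j<n. Z j * x - X j * z)"
  using assms
proof (induction n arbitrary: f)
  case 0
  then obtain b where "f = binary_form 0 b" unfolding is_binary_form_def by blast
  then show ?case by (simp add: binary_form_def)
next
  case (Suc n)
  have "\<exists>R. is_binary_form n R \<and> (\<forall>x z. f x z = (Z n * x - X n * z) * R x z)"
    using Suc.prems(2)[of n] by (intro binary_form_factor_root[OF Suc.prems(1)]) simp_all
  then obtain R where R: "is_binary_form n R" "\<forall>x z. f x z = (Z n * x - X n * z) * R x z"
    by (elim exE conjE)
  have "(X j, Z j) \<noteq> (0, 0) \<and> R (X j) (Z j) = 0" if "j < n" for j
    using Suc.prems(2)[of j] Suc.prems(3)[of n j] R(2) that by auto
  moreover have "Z i * X j - X i * Z j \<noteq> 0" if "i < n" "j < n" "i \<noteq> j" for i j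
    using Suc.prems(3) that by simp
  ultimately have "\<exists>c. \<forall>x z. R x z = c * (\<Prod>j<n. Z j * x - X j * z)"
    by (rule Suc.IH[OF R(1)])
  then obtain c where c: "\<forall>x z. R x z = c * (\<Prod>j<n. Z j * x - X j * z)" ..
  show ?case
    by (intro exI[of _ c]) (simp add: R(2) c algebra_simps)
qed

section \<open>Secants of the twisted cubic\<close>

lemma complex_root_exists:
  assumes "n > 0"
  shows "\<exists>r::complex. r ^ n = a"
proof (cases "a = 0")
  case True
  with assms show ?thesis by (intro exI[of _ 0]) simp
next
  case False
  have "exp (Ln a / of_nat n) ^ n = exp (of_nat n * (Ln a / of_nat n))"
    by (rule exp_of_nat_mult[symmetric])
  also have "\<dots> = a" using assms False by simp
  finally show ?thesis ..
qed

text \<open>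
  (k0, k1, k2) = (q1 q3 - q2^2, q1 q2 - q0 q3, q0 q2 - q1^2) spans the kernel of the Hankel
  matrix of q, and cubic_disc is the discriminant k1^2 - 4 k0 k2 of the quadratic they define.
  Its zero set is the tangent surface of the twisted cubic.
\<close>
definition cubic_disc :: "'a::comm_ring_1 \<Rightarrow> 'a \<Rightarrow> 'a \<Rightarrow> 'a \<Rightarrow> 'a" where
  "cubic_disc q0 q1 q2 q3 = (q1 * q2 - q0 * q3)^2 - 4 * (q1 * q3 - q2^2) * (q0 * q2 - q1^2)"

lemma cubic_disc_scale:
  "cubic_disc (c * q0) (c * q1) (c * q2) (c * q3) = c ^ 4 * cubic_disc q0 q1 q2 q3"
  unfolding cubic_disc_def by (simp add: algebra_simps power2_eq_square power4_eq_xxxx)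

lemma poly_cubic_disc:
  "poly (cubic_disc p0 p1 p2 p3) t = cubic_disc (poly p0 t) (poly p1 t) (poly p2 t) (poly p3 t)"
  unfolding cubic_disc_def by (simp only: poly_diff poly_mult poly_power) simp

lemma cubic_disc_secant_combination:
  fixes a b x z x' z' :: "'a::comm_ring_1"
  shows "cubic_disc (a * z^3 + b * z'^3) (a * x * z^2 + b * x' * z'^2) (a * x^2 * z + b * x'^2 * z')
      (a * x^3 + b * x'^3) = (a * b)^2 * (x * z' - x' * z)^6"
proof -
  let ?q0 = "a * z^3 + b * z'^3" and ?q1 = "a * x * z^2 + b * x' * z'^2"
    and ?q2 = "a * x^2 * z + b * x'^2 * z'" and ?q3 = "a * x^3 + b * x'^3" and ?d = "x * z' - x' * z"
  have k0: "?q1 * ?q3 - ?q2^2 = a * b * x * x' * ?d^2"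
    and k1: "?q1 * ?q2 - ?q0 * ?q3 = - a * b * (x * z' + x' * z) * ?d^2"
    and k2: "?q0 * ?q2 - ?q1^2 = a * b * z * z' * ?d^2"
    by (simp_all add: algebra_simps power2_eq_square power3_eq_cube)
  have "cubic_disc ?q0 ?q1 ?q2 ?q3
      = (a * b)^2 * (?d^2)^2 * ((x * z' + x' * z)^2 - 4 * x * x' * z * z')"
    unfolding cubic_disc_def k0 k1 k2 by (simp add: power2_eq_square algebra_simps)
  also have "(x * z' + x' * z)^2 - 4 * x * x' * z * z' = ?d^2"
    by (simp add: algebra_simps power2_eq_square)
  also have "(a * b)^2 * (?d^2)^2 * ?d^2 = (a * b)^2 * ?d^6"
    by (simp add: mult.assoc flip: power_add)
  finally show ?thesis .
qed

lemma quadratic_distinct_roots: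
  fixes k0 k1 k2 :: complex
  assumes "k2 \<noteq> 0" "k1^2 - 4 * k0 * k2 \<noteq> 0"
  obtains t1 t2 where "t1 \<noteq> t2" "k2 * t1^2 + k1 * t1 + k0 = 0" "k2 * t2^2 + k1 * t2 + k0 = 0"
proof -
  obtain d where d: "d^2 = k1^2 - 4 * k0 * k2" using power2_csqrt by blast
  have root: "k2 * t^2 + k1 * t + k0 = 0" if "2 * k2 * t = e - k1" "e^2 = d^2" for t e
  proof -
    have "4 * k2 * (k2 * t^2 + k1 * t + k0) = (2 * k2 * t)^2 + 2 * k1 * (2 * k2 * t) + 4 * k0 * k2"
      by (simp add: algebra_simps power2_eq_square)
    also have "\<dots> = e^2 - d^2" unfolding that(1) d by (simp add: algebra_simps power2_eq_square)
    finally show ?thesis using assms(1) that(2) by simp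
  qed
  have "d \<noteq> 0" using d assms(2) by auto
  show ?thesis
  proof (rule that)
    show "(d - k1) / (2 * k2) \<noteq> (- d - k1) / (2 * k2)"
      using \<open>d \<noteq> 0\<close> assms(1) by (simp add: divide_cancel_right)
    show "k2 * ((d - k1) / (2 * k2))^2 + k1 * ((d - k1) / (2 * k2)) + k0 = 0"
      by (rule root[of _ d]) (use assms(1) in simp_all)
    show "k2 * ((- d - k1) / (2 * k2))^2 + k1 * ((- d - k1) / (2 * k2)) + k0 = 0"
      by (rule root[of _ "- d"]) (use assms(1) in simp_all)
  qed
qed

lemma second_order_recurrence_solution:
  fixes q0 q1 q2 q3 t1 t2 :: "'a::field"
  assumes "k2 \<noteq> 0" "t1 \<noteq> t2"
    and roots: "k2 * t1^2 + k1 * t1 + k0 = 0" "k2 * t2^2 + k1 * t2 + k0 = 0"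
    and recurrence: "k0 * q0 + k1 * q1 + k2 * q2 = 0" "k0 * q1 + k1 * q2 + k2 * q3 = 0"
  obtains a b where "q0 = a + b" "q1 = a * t1 + b * t2" "q2 = a * t1^2 + b * t2^2"
    "q3 = a * t1^3 + b * t2^3"
proof -
  define a where "a = (q1 - t2 * q0) / (t1 - t2)"
  define b where "b = (t1 * q0 - q1) / (t1 - t2)"
  have "t1 - t2 \<noteq> 0" using assms(2) by simp
  have "a + b = q0 * (t1 - t2) / (t1 - t2)"
    unfolding a_def b_def by (simp add: add_divide_distrib[symmetric] algebra_simps)
  with \<open>t1 - t2 \<noteq> 0\<close> have s0: "q0 = a + b" by simp
  have "a * t1 + b * t2 = q1 * (t1 - t2) / (t1 - t2)"
    unfolding a_def b_def by (simp add: times_divide_eq_left add_divide_distrib[symmetric] algebra_simps)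
  with \<open>t1 - t2 \<noteq> 0\<close> have s1: "q1 = a * t1 + b * t2" by simp
  have "k2 * q2 = k2 * (a * t1^2 + b * t2^2)"
    using recurrence(1) roots unfolding s0 s1 by algebra
  then have s2: "q2 = a * t1^2 + b * t2^2" using assms(1) by simp
  have "k2 * q3 = k2 * (a * t1^3 + b * t2^3)"
    using recurrence(2) roots unfolding s1 s2 by algebra
  then have s3: "q3 = a * t1^3 + b * t2^3" using assms(1) by simp
  from s0 s1 s2 s3 show ?thesis by (rule that)
qed

lemma cubic_disc_nonzero_weighted_secant:
  fixes q0 q1 q2 q3 :: complex
  assumes "cubic_disc q0 q1 q2 q3 \<noteq> 0"
  obtains a b x z x' z' where "q0 = a * z^3 + b * z'^3" "q1 = a * x * z^2 + b * x' * z'^2"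
    "q2 = a * x^2 * z + b * x'^2 * z'" "q3 = a * x^3 + b * x'^3"
proof -
  define k0 k1 k2 where "k0 = q1 * q3 - q2^2" and "k1 = q1 * q2 - q0 * q3" and "k2 = q0 * q2 - q1^2"
  have recurrence: "k0 * q0 + k1 * q1 + k2 * q2 = 0" "k0 * q1 + k1 * q2 + k2 * q3 = 0"
    unfolding k0_def k1_def k2_def by algebra+
  have disc: "k1^2 - 4 * k0 * k2 \<noteq> 0"
    using assms unfolding cubic_disc_def k0_def k1_def k2_def .
  show ?thesis
  proof (cases "k2 = 0")
    case True
    \<comment> \<open>one end of the secant is the point at infinity \<open>(x : z) = (1 : 0)\<close>\<close>
    then have "k1 \<noteq> 0" using disc by simp
    have "k1 * q1 = - (k0 * q0)"
      using recurrence(1) True by (simp add: eq_neg_iff_add_eq_0 add.commute)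
    with \<open>k1 \<noteq> 0\<close> have e1: "q1 = - k0 * q0 / k1" by (simp add: field_simps)
    have e2: "q2 = k0^2 * q0 / k1^2"
      using recurrence(2) True \<open>k1 \<noteq> 0\<close> e1 by (simp add: field_simps power2_eq_square)
    show ?thesis
      by (rule that[where a = "q0 / k1^3" and b = "q3 + k0^3 * q0 / k1^3" and x = "- k0" and z = k1
            and x' = 1 and z' = 0])
        (use \<open>k1 \<noteq> 0\<close> e1 e2 in \<open>simp_all add: field_simps power2_eq_square power3_eq_cube\<close>)
  next
    case False
    obtain t1 t2 where roots: "t1 \<noteq> t2" "k2 * t1^2 + k1 * t1 + k0 = 0" "k2 * t2^2 + k1 * t2 + k0 = 0"
      by (rule quadratic_distinct_roots[OF False disc])
    obtain a b where "q0 = a + b" "q1 = a * t1 + b * t2" "q2 = a * t1^2 + b * t2^2"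
        "q3 = a * t1^3 + b * t2^3"
      by (rule second_order_recurrence_solution[OF False roots recurrence])
    then show ?thesis by (intro that[where x = t1 and z = 1 and x' = t2 and z' = 1]) simp_all
  qed
qed

lemma cubic_disc_nonzero_secant:
  fixes q0 q1 q2 q3 :: complex
  assumes "cubic_disc q0 q1 q2 q3 \<noteq> 0"
  obtains x z x' z' where "q0 = z^3 + z'^3" "q1 = x * z^2 + x' * z'^2"
    "q2 = x^2 * z + x'^2 * z'" "q3 = x^3 + x'^3"
proof -
  obtain a b x z x' z' where q: "q0 = a * z^3 + b * z'^3" "q1 = a * x * z^2 + b * x' * z'^2"
      "q2 = a * x^2 * z + b * x'^2 * z'" "q3 = a * x^3 + b * x'^3"
    by (rule cubic_disc_nonzero_weighted_secant[OF assms])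
  obtain r s where "a = r^3" "b = s^3" using complex_root_exists[of 3 a] complex_root_exists[of 3 b] by auto
  with q show ?thesis
    by (intro that[where x = "r * x" and z = "r * z" and x' = "s * x'" and z' = "s * z'"])
      (simp_all add: power_mult_distrib power2_eq_square power3_eq_cube algebra_simps)
qed

section \<open>Secants of the tricanonical curve\<close>

lemma mem_closure_if_cofinite_on_line:
  fixes w v :: "'a::real_normed_vector"
  assumes "finite {t::real. w + t *\<^sub>R v \<notin> S}"
  shows "w \<in> closure S"
  unfolding closure_approachable
proof (intro allI impI)
  fix r :: real
  assume "r > 0"
  have "norm v + 1 > 0" by (simp add: add_nonneg_pos)
  define \<delta> where "\<delta> = r / (norm v + 1)"
  have "\<delta> > 0" using \<open>r > 0\<close> \<open>norm v + 1 > 0\<close> by (simp add: \<delta>_def)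
  then have "infinite ({0<..<\<delta>} - {t. w + t *\<^sub>R v \<notin> S})"
    using assms by (simp add: Diff_infinite_finite)
  then obtain t where "t \<in> {0<..<\<delta>} - {t. w + t *\<^sub>R v \<notin> S}"
    by (metis ex_in_conv infinite_imp_nonempty)
  then have t: "0 < t" "t < \<delta>" "w + t *\<^sub>R v \<in> S" by auto
  have "dist (w + t *\<^sub>R v) w = t * norm v" using t by (simp add: dist_norm)
  also have "\<dots> \<le> \<delta> * norm v" using t by (simp add: mult_right_mono)
  also have "\<dots> < r" using \<open>r > 0\<close> \<open>norm v + 1 > 0\<close> by (simp add: \<delta>_def field_simps)
  finally show "\<exists>y\<in>S. dist y w < r" using t by blast
qed

lemma exhaust_5:
  fixes i :: 5
  shows "i = 1 \<or> i = 2 \<or> i = 3 \<or> i = 4 \<or> i = 5"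
proof (induct i)
  case (of_int z)
  then have "z = 0 \<or> z = 1 \<or> z = 2 \<or> z = 3 \<or> z = 4" by fastforce
  then show ?case by auto
qed

lemma vec5_eq_iff:
  "(v::'a^5) = w \<longleftrightarrow> v$1 = w$1 \<and> v$2 = w$2 \<and> v$3 = w$3 \<and> v$4 = w$4 \<and> v$5 = w$5"
  unfolding vec_eq_iff by (metis exhaust_5)

lemma emb_nth [simp]:
  "emb x z y $ 1 = z^3" "emb x z y $ 2 = x * z^2" "emb x z y $ 3 = x^2 * z"
  "emb x z y $ 4 = x^3" "emb x z y $ 5 = y"
  by (simp_all add: emb_def vector_def)

lemma scaleR_eq_of_real_vector_mult: "t *\<^sub>R (v :: complex^'n) = complex_of_real t *s v"
  unfolding vec_eq_iff vector_scaleR_component vector_smult_component by (simp add: scaleR_conv_of_real)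

text \<open>The section of omega^3 given by the binary cubic with coefficients b, as a linear form.\<close>
definition cubic_functional :: "(nat \<Rightarrow> complex) \<Rightarrow> complex^5 \<Rightarrow> complex" where
  "cubic_functional b v = b 0 * v$1 + b 1 * v$2 + b 2 * v$3 + b 3 * v$4"

lemma cubic_functional_emb: "cubic_functional b (emb x z y) = binary_form 3 b x z"
  by (simp add: cubic_functional_def binary_form_def eval_nat_numeral algebra_simps)

lemma cubic_functional_add: "cubic_functional b (u + v) = cubic_functional b u + cubic_functional b v"
  by (simp add: cubic_functional_def algebra_simps)

lemma cubic_functional_diff: "cubic_functional b (u - v) = cubic_functional b u - cubic_functional b v"
  by (simp add: cubic_functional_def algebra_simps)

lemma cubic_functional_smult: "cubic_functional b (c *s v) = c * cubic_functional b v"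
  by (simp add: cubic_functional_def algebra_simps)

lemma cspan3_subset_kernel:
  fixes f :: "complex^5 \<Rightarrow> complex"
  assumes "\<And>u v. f (u + v) = f u + f v" "\<And>c u. f (c *s u) = c * f u"
    and "f u1 = 0" "f u2 = 0" "f u3 = 0"
  shows "cspan3 u1 u2 u3 \<subseteq> {v. f v = 0}"
  using assms unfolding cspan3_def by auto

definition secant_sums :: "(nat \<Rightarrow> complex) \<Rightarrow> (complex^5) set" where
  "secant_sums a = {u + v | u v. u \<in> curve_cone a \<and> v \<in> curve_cone a}"

lemma sec_cone_eq_closure_secant_sums: "sec_cone a = closure (secant_sums a)"
  unfolding sec_cone_def secant_sums_def ..

lemma mem_secant_sums_if_cubic_disc_nonzero:
  assumes F: "\<And>x z. sext a x z = binary_form 3 g x z * binary_form 3 h x z"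
    and w: "cubic_functional g w = 0" "cubic_functional h w = 0" "w $ 5 = 0"
    and disc: "cubic_disc (w$1) (w$2) (w$3) (w$4) \<noteq> 0"
  shows "w \<in> secant_sums a"
proof -
  obtain x z x' z' where "w$1 = z^3 + z'^3" "w$2 = x * z^2 + x' * z'^2"
      "w$3 = x^2 * z + x'^2 * z'" "w$4 = x^3 + x'^3"
    by (rule cubic_disc_nonzero_secant[OF disc])
  then have w_eq: "w = emb x z y + emb x' z' (- y)" for y
    using w(3) by (simp add: vec5_eq_iff)
  have "binary_form 3 g x z = - binary_form 3 g x' z'" "binary_form 3 h x z = - binary_form 3 h x' z'"
    using w(1,2) unfolding w_eq[of 0] cubic_functional_add cubic_functional_emb
    by (simp_all add: eq_neg_iff_add_eq_0)
  then have "sext a x' z' = sext a x z" by (simp add: F)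
  then have "emb x z (csqrt (sext a x z)) \<in> curve_cone a" "emb x' z' (- csqrt (sext a x z)) \<in> curve_cone a"
    unfolding curve_cone_def by force+
  then show ?thesis unfolding secant_sums_def w_eq[of "csqrt (sext a x z)"] by blast
qed

lemma mem_sec_cone_if_kernel_has_generic_point:
  assumes F: "\<And>x z. sext a x z = binary_form 3 g x z * binary_form 3 h x z"
    and v: "cubic_functional g v = 0" "cubic_functional h v = 0" "v $ 5 = 0"
    and disc: "cubic_disc (v$1) (v$2) (v$3) (v$4) \<noteq> 0"
    and w: "cubic_functional g w = 0" "cubic_functional h w = 0" "w $ 5 = 0"
  shows "w \<in> sec_cone a"
proof -
  \<comment> \<open>Q(s) is the discriminant of v + s w, so that of w + t v is t^4 Q(1/t).\<close>
  define Q where "Q = cubic_disc [:v$1, w$1:] [:v$2, w$2:] [:v$3, w$3:] [:v$4, w$4:]"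
  have "poly Q 0 \<noteq> 0" using disc by (simp add: Q_def poly_cubic_disc)
  then have "Q \<noteq> 0" by auto
  have on_line: "w + t *\<^sub>R v \<in> secant_sums a"
    if "t \<noteq> 0" "poly Q (inverse (of_real t)) \<noteq> 0" for t
  proof (rule mem_secant_sums_if_cubic_disc_nonzero[OF F])
    define e where "e = complex_of_real t"
    have "e \<noteq> 0" using \<open>t \<noteq> 0\<close> by (simp add: e_def)
    have nth: "(w + t *\<^sub>R v) $ i = e * (v$i + inverse e * w$i)" for i
      using \<open>e \<noteq> 0\<close> by (simp add: e_def scaleR_eq_of_real_vector_mult field_simps)
    show "cubic_disc ((w + t *\<^sub>R v)$1) ((w + t *\<^sub>R v)$2) ((w + t *\<^sub>R v)$3) ((w + t *\<^sub>R v)$4) \<noteq> 0"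
      using \<open>e \<noteq> 0\<close> that(2)
      unfolding nth cubic_disc_scale by (simp add: e_def Q_def poly_cubic_disc)
    show "cubic_functional g (w + t *\<^sub>R v) = 0" "cubic_functional h (w + t *\<^sub>R v) = 0"
      "(w + t *\<^sub>R v) $ 5 = 0"
      using v w by (simp_all add: scaleR_eq_of_real_vector_mult cubic_functional_add cubic_functional_smult)
  qed
  have "{t. w + t *\<^sub>R v \<notin> secant_sums a}
      \<subseteq> {0} \<union> (\<lambda>t. inverse (complex_of_real t)) -` {s. poly Q s = 0}"
    using on_line by blast
  moreover have "finite ((\<lambda>t. inverse (complex_of_real t)) -` {s. poly Q s = 0})"
    using poly_roots_finite[OF \<open>Q \<noteq> 0\<close>] by (rule finite_vimageI) (simp add: inj_on_def)
  ultimately have "finite {t. w + t *\<^sub>R v \<notin> secant_sums a}"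
    by (simp add: finite_subset)
  then show ?thesis
    unfolding sec_cone_eq_closure_secant_sums by (rule mem_closure_if_cofinite_on_line)
qed

lemma weierstrass_vec_emb:
  assumes "weierstrass_vec a v"
  shows "\<exists>x z. v = emb x z 0 \<and> sext a x z = 0 \<and> (x, z) \<noteq> (0, 0)"
proof -
  obtain x z y where v: "v = emb x z y" "y^2 = sext a x z"
    using assms unfolding weierstrass_vec_def curve_cone_def by blast
  have "y = 0" using assms v(1) unfolding weierstrass_vec_def plus_hyperplane_def by simp
  moreover have "(x, z) \<noteq> (0, 0)"
    using assms v(1) \<open>y = 0\<close> unfolding weierstrass_vec_def by (auto simp: vec5_eq_iff)
  ultimately show ?thesis using v by auto
qed

lemma proportional_emb_not_proj_distinct:
  assumes "(x, z) \<noteq> (0, 0)" "z * x' - x * z' = 0"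
  shows "\<not> proj_distinct (emb x' z' 0) (emb x z 0)"
proof -
  obtain s where s: "x' = s * x" "z' = s * z"
  proof (cases "x = 0")
    case True
    with assms show ?thesis by (intro that[of "z' / z"]) auto
  next
    case False
    with assms(2) show ?thesis by (intro that[of "x' / x"]) (auto simp: field_simps)
  qed
  then have "emb x' z' 0 = s^3 *s emb x z 0"
    by (simp add: vec5_eq_iff power_mult_distrib power2_eq_square power3_eq_cube algebra_simps)
  then show ?thesis unfolding proj_distinct_def by blast
qed

lemma span_intersection_subset_W':
  fixes X Z :: "nat \<Rightarrow> complex"
  assumes F: "\<And>x z. sext a x z = c * (\<Prod>j<6. Z j * x - X j * z)"
    and indep: "\<And>i j. i < 6 \<Longrightarrow> j < 6 \<Longrightarrow> i \<noteq> j \<Longrightarrow> Z i * X j - X i * Z j \<noteq> 0"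
    and p: "\<And>i. i < 6 \<Longrightarrow> p i = emb (X i) (Z i) 0"
  shows "cspan3 (p 0) (p 1) (p 2) \<inter> cspan3 (p 3) (p 4) (p 5) \<subseteq> W' a"
proof -
  define G where "G x z = c * (\<Prod>j<3. Z j * x - X j * z)" for x z
  define H where "H x z = (\<Prod>j<3. Z (j + 3) * x - X (j + 3) * z)" for x z
  obtain g h where g: "G = binary_form 3 g" and h: "H = binary_form 3 h"
    using is_binary_form_scale[OF is_binary_form_prod_linear[of 3 Z X], of c]
      is_binary_form_prod_linear[of 3 "\<lambda>j. Z (j + 3)" "\<lambda>j. X (j + 3)"]
    unfolding is_binary_form_def G_def[abs_def] H_def[abs_def] by blast
  have F': "sext a x z = binary_form 3 g x z * binary_form 3 h x z" for x z
    unfolding g[symmetric] h[symmetric] G_def H_def F by (simp add: eval_nat_numeral ac_simps)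
  have G_root: "G (X i) (Z i) = 0" if "i < 3" for i
    using that unfolding G_def by (auto simp: prod_zero_iff intro!: bexI[of _ i])
  have H_root: "H (X (i + 3)) (Z (i + 3)) = 0" if "i < 3" for i
    using that unfolding H_def by (auto simp: prod_zero_iff intro!: bexI[of _ i])
  have H_nonroot: "H (X i) (Z i) \<noteq> 0" if "i < 3" for i
    using that indep unfolding H_def by (auto simp: prod_zero_iff)
  have g_p: "cubic_functional g (p i) = 0" if "i < 3" for i
    using G_root[OF that] p[of i] that unfolding g by (simp add: cubic_functional_emb)
  have h_p: "cubic_functional h (p (i + 3)) = 0" if "i < 3" for i
    using H_root[OF that] p[of "i + 3"] that unfolding h by (simp add: cubic_functional_emb)
  have p5: "p i $ 5 = 0" if "i < 6" for i using that p by simp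
  define v where "v = H (X 1) (Z 1) *s p 0 - H (X 0) (Z 0) *s p 1"
  have v: "cubic_functional g v = 0" "cubic_functional h v = 0" "v $ 5 = 0"
    using g_p[of 0] g_p[of 1] p5[of 0] p5[of 1] p[of 0] p[of 1]
    by (simp_all add: v_def cubic_functional_diff cubic_functional_smult cubic_functional_emb
        h[symmetric] mult.commute)
  have "cubic_disc (v$1) (v$2) (v$3) (v$4)
      = cubic_disc (H (X 1) (Z 1) * Z 0^3 + (- H (X 0) (Z 0)) * Z 1^3)
          (H (X 1) (Z 1) * X 0 * Z 0^2 + (- H (X 0) (Z 0)) * X 1 * Z 1^2)
          (H (X 1) (Z 1) * X 0^2 * Z 0 + (- H (X 0) (Z 0)) * X 1^2 * Z 1)
          (H (X 1) (Z 1) * X 0^3 + (- H (X 0) (Z 0)) * X 1^3)"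
    using p[of 0] p[of 1] by (simp add: v_def mult.assoc)
  also have "\<dots> = (H (X 1) (Z 1) * - H (X 0) (Z 0))^2 * (X 0 * Z 1 - X 1 * Z 0)^6"
    by (rule cubic_disc_secant_combination)
  finally have "cubic_disc (v$1) (v$2) (v$3) (v$4)
      = (H (X 1) (Z 1) * - H (X 0) (Z 0))^2 * (X 0 * Z 1 - X 1 * Z 0)^6" .
  moreover have "X 0 * Z 1 - X 1 * Z 0 \<noteq> 0" using indep[of 1 0] by (simp add: ac_simps)
  ultimately have disc: "cubic_disc (v$1) (v$2) (v$3) (v$4) \<noteq> 0"
    using H_nonroot[of 0] H_nonroot[of 1] by simp
  show ?thesis
  proof
    fix w assume w: "w \<in> cspan3 (p 0) (p 1) (p 2) \<inter> cspan3 (p 3) (p 4) (p 5)"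
    have "cspan3 (p 0) (p 1) (p 2) \<subseteq> {w. cubic_functional g w = 0}"
      using g_p[of 0] g_p[of 1] g_p[of 2]
      by (intro cspan3_subset_kernel) (simp_all add: cubic_functional_add cubic_functional_smult)
    moreover have "cspan3 (p 3) (p 4) (p 5) \<subseteq> {w. cubic_functional h w = 0}"
      using h_p[of 0] h_p[of 1] h_p[of 2]
      by (intro cspan3_subset_kernel) (simp_all add: cubic_functional_add cubic_functional_smult)
    moreover have "cspan3 (p 0) (p 1) (p 2) \<subseteq> {w. w $ 5 = 0}"
      using p5[of 0] p5[of 1] p5[of 2] by (intro cspan3_subset_kernel) simp_all
    ultimately have "cubic_functional g w = 0" "cubic_functional h w = 0" "w $ 5 = 0" using w by blast+
    then show "w \<in> W' a"
      unfolding W'_def plus_hyperplane_def using mem_sec_cone_if_kernel_has_generic_point[OF F' v disc] by blast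
  qed
qed

theorem mainTheorem12:
  fixes a :: "nat \<Rightarrow> complex" and p :: "nat \<Rightarrow> complex ^ 5"
  assumes "genus2_coeffs a"
    and "\<forall>i<6. weierstrass_vec a (p i)"
    and "\<forall>i<6. \<forall>j<6. i \<noteq> j \<longrightarrow> proj_distinct (p i) (p j)"
  shows "cspan3 (p 0) (p 1) (p 2) \<inter> cspan3 (p 3) (p 4) (p 5) \<subseteq> W' a"
proof -
  have "\<forall>i<6. \<exists>x z. p i = emb x z 0 \<and> sext a x z = 0 \<and> (x, z) \<noteq> (0, 0)"
    using assms(2) weierstrass_vec_emb by blast
  then obtain X Z where XZ: "\<And>i. i < 6 \<Longrightarrow> p i = emb (X i) (Z i) 0 \<and> sext a (X i) (Z i) = 0 \<and> (X i, Z i) \<noteq> (0, 0)"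
    by metis
  have indep: "Z i * X j - X i * Z j \<noteq> 0" if "i < 6" "j < 6" "i \<noteq> j" for i j
  proof
    assume "Z i * X j - X i * Z j = 0"
    then have "\<not> proj_distinct (p j) (p i)"
      using proportional_emb_not_proj_distinct[of "X i" "Z i" "X j" "Z j"] XZ[OF that(1)] XZ[OF that(2)]
      by simp
    with assms(3) that show False by blast
  qed
  have "\<exists>c. \<forall>x z. sext a x z = c * (\<Prod>j<6. Z j * x - X j * z)"
    by (rule binary_form_eq_prod_roots) (use XZ indep in \<open>auto simp: is_binary_form_def sext_def binary_form_def fun_eq_iff\<close>)
  then obtain c where "\<forall>x z. sext a x z = c * (\<Prod>j<6. Z j * x - X j * z)" ..
  then show ?thesis using span_intersection_subset_W' indep XZ by blast
qed

end
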